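(* For every Markov kernel $P_{Y|X}:\mathcal X\to\mathcal Y$ between measurable spaces, $$\eta_{\chi^2}(P_{Y|X})=\eta_{\mathrm{KL}}(P_{Y|X}).$$
   Context: For $P\ll Q$: $D(P\|Q)=\int \log\frac{dP}{dQ}\,dP$ (KL divergence), $\chi^2(P\|Q)=\int (\frac{dP}{dQ})^2dQ-1$. For a divergence $D_f$ (either of these), for $Q$ not a point mass, $\eta_f(P_{Y|X},Q)=\sup\{D_f(P_{Y|X}\circ P\|P_{Y|X}\circ Q)/D_f(P\|Q): 0<D_f(P\|Q)<\infty\}$ where $P_{Y|X}\circ P$ is the output distribution induced by input distribution $P$, and $\eta_f(P_{Y|X})=\sup_Q\eta_f(P_{Y|X},Q)$ over $Q$ not a point mass. $\eta_{\mathrm{KL}}$ and $\eta_{\chi^2}$ denote these coefficients for KL and $\chi^2$ divergence respectively. *)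

theory Defs
  imports "HOL-Probability.Probability"
begin

text \<open>The density dP/dQ is
  the Radon-Nikodym derivative RN_deriv Q P (so that density Q (RN_deriv Q P) = P).\<close>

definition kl_div :: "'a measure \<Rightarrow> 'a measure \<Rightarrow> ereal" where
  "kl_div P Q =
     (if sets P = sets Q \<and> absolutely_continuous Q P
      then enn2ereal (\<integral>\<^sup>+ x. ennreal (ln (enn2real (RN_deriv Q P x))) \<partial>P)
         - enn2ereal (\<integral>\<^sup>+ x. ennreal (- ln (enn2real (RN_deriv Q P x))) \<partial>P)
      else \<infinity>)"

definition chi2_div :: "'a measure \<Rightarrow> 'a measure \<Rightarrow> ereal" where
  "chi2_div P Q =
     (if sets P = sets Q \<and> absolutely_continuous Q P
      then enn2ereal (\<integral>\<^sup>+ x. (RN_deriv Q P x)\<^sup>2 \<partial>Q) - 1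
      else \<infinity>)"

definition point_mass :: "'a measure \<Rightarrow> 'a measure \<Rightarrow> bool" where
  "point_mass X Q \<longleftrightarrow> (\<exists>x\<in>space X. Q = return X x)"

text \<open>Contraction coefficient eta_f(K, Q) of a Markov kernel K from X to Y
  (K \<in> measurable X (prob_algebra Y)) at input distribution Q, for a divergence D.\<close>
definition eta_at ::
  "('b measure \<Rightarrow> 'b measure \<Rightarrow> ereal) \<Rightarrow> ('a measure \<Rightarrow> 'a measure \<Rightarrow> ereal)
   \<Rightarrow> 'a measure \<Rightarrow> ('a \<Rightarrow> 'b measure) \<Rightarrow> 'a measure \<Rightarrow> ereal" where
  "eta_at DY DX X K Q =
     (SUP P \<in> {P \<in> space (prob_algebra X). 0 < DX P Q \<and> DX P Q < \<infinity>}.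
        DY (bind P K) (bind Q K) / DX P Q)"

definition eta ::
  "('b measure \<Rightarrow> 'b measure \<Rightarrow> ereal) \<Rightarrow> ('a measure \<Rightarrow> 'a measure \<Rightarrow> ereal)
   \<Rightarrow> 'a measure \<Rightarrow> ('a \<Rightarrow> 'b measure) \<Rightarrow> ereal" where
  "eta DY DX X K =
     (SUP Q \<in> {Q \<in> space (prob_algebra X). \<not> point_mass X Q}. eta_at DY DX X K Q)"

definition eta_KL :: "'a measure \<Rightarrow> ('a \<Rightarrow> 'b measure) \<Rightarrow> ereal" where
  "eta_KL X K = eta kl_div kl_div X K"

definition eta_chi2 :: "'a measure \<Rightarrow> ('a \<Rightarrow> 'b measure) \<Rightarrow> ereal" where
  "eta_chi2 X K = eta chi2_div chi2_div X K"

end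

theory Submission
  imports Defs
begin

text \<open>
  Both inequalities compare the two divergences along the mixtures \<open>(1 - t) Q + t P\<close>, which
  a Markov kernel maps to the corresponding mixtures of the output distributions; such mixtures
  of a distribution that is not a point mass are not point masses either.

  \<open>\<eta>\<^sub>K\<^sub>L \<le> \<eta>\<^sub>\<chi>\<^sub>2\<close>: KL divergence is an average of \<open>\<chi>\<^sup>2\<close>-divergences to mixtures,
  \<open>D(P\<parallel>Q) = \<integral>\<^sub>0\<^sup>1 \<chi>\<^sup>2(P\<parallel>(1 - t) Q + t P) / (1 - t) dt\<close>, so contraction of every term
  by \<open>\<eta>\<^sub>\<chi>\<^sub>2\<close> passes to the integral.

  \<open>\<eta>\<^sub>\<chi>\<^sub>2 \<le> \<eta>\<^sub>K\<^sub>L\<close>: KL divergence is locally quadratic,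
  \<open>D((1 - e) Q + e P\<parallel>Q) = e\<^sup>2/2 \<chi>\<^sup>2(P\<parallel>Q) + o(e\<^sup>2)\<close>. An explicit upper bound on the
  input side and a lower bound by a damped \<open>\<chi>\<^sup>2\<close>-integrand on the output side turn contraction
  of KL into contraction of \<open>\<chi>\<^sup>2\<close> as \<open>e \<rightarrow> 0\<close>, by monotone convergence.
\<close>

section \<open>Real-variable estimates\<close>

definition kl_fun :: "real \<Rightarrow> real" where
  "kl_fun z = z * ln z - z + 1"

text \<open>\<open>D(P\<parallel>Q) = \<integral> kl_fun (dP/dQ) dQ\<close> and
  \<open>\<chi>\<^sup>2(P\<parallel>(1 - t) Q + t P) = (1 - t) \<integral> chi2_mix_fun t (dP/dQ) dQ\<close>; the two are linked by
  \<open>\<integral>\<^sub>0\<^sup>1 chi2_mix_fun t y dt = kl_fun y\<close>.\<close>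

definition chi2_mix_fun :: "real \<Rightarrow> real \<Rightarrow> real" where
  "chi2_mix_fun t y = (1 - t) * (y - 1)^2 / (1 - t + t * y)"

lemma kl_fun_measurable [measurable]: "kl_fun \<in> borel_measurable borel"
  unfolding kl_fun_def by measurable

lemma chi2_mix_fun_measurable [measurable]:
  "chi2_mix_fun t \<in> borel_measurable borel" "(\<lambda>t. chi2_mix_fun t y) \<in> borel_measurable borel"
  unfolding chi2_mix_fun_def by measurable measurable

lemma mixture_weight_pos: "0 \<le> t \<Longrightarrow> t < 1 \<Longrightarrow> 0 \<le> y \<Longrightarrow> 0 < 1 - t + t * (y::real)"
  by (smt (verit) mult_nonneg_nonneg)

lemma one_minus_inverse_le_ln: "0 < (s::real) \<Longrightarrow> 1 - 1 / s \<le> ln s"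
  using ln_le_minus_one[of "1/s"] by (simp add: ln_div)

lemma has_real_derivative_kl_fun: "0 < s \<Longrightarrow> (kl_fun has_real_derivative ln s) (at s)"
  unfolding kl_fun_def by (auto intro!: derivative_eq_intros simp: field_simps)

lemma nonneg_if_derivative_changes_sign_at_1:
  fixes g g' :: "real \<Rightarrow> real"
  assumes "0 < z" and "g 1 = 0"
    and deriv: "\<And>s. 0 < s \<Longrightarrow> (g has_real_derivative g' s) (at s)"
    and right: "\<And>s. 1 \<le> s \<Longrightarrow> s \<le> z \<Longrightarrow> 0 \<le> g' s"
    and left: "\<And>s. z \<le> s \<Longrightarrow> s \<le> 1 \<Longrightarrow> g' s \<le> 0"
  shows "0 \<le> g z"
proof (cases "1 \<le> z")
  case True
  have "g 1 \<le> g z"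
  proof (rule DERIV_nonneg_imp_nondecreasing[OF True])
    fix s assume "1 \<le> s" "s \<le> z"
    then show "\<exists>y. (g has_real_derivative y) (at s) \<and> 0 \<le> y"
      using deriv[of s] right[of s] by auto
  qed
  then show ?thesis using \<open>g 1 = 0\<close> by simp
next
  case False
  have "g 1 \<le> g z"
  proof (rule DERIV_nonpos_imp_nonincreasing[of z 1])
    show "z \<le> 1" using False by simp
    fix s assume "z \<le> s" "s \<le> 1"
    then show "\<exists>y. (g has_real_derivative y) (at s) \<and> y \<le> 0"
      using deriv[of s] left[of s] \<open>0 < z\<close> by auto
  qed
  then show ?thesis using \<open>g 1 = 0\<close> by simp
qed

lemma kl_fun_le_square:
  assumes "0 < e" "e < 1" and "1 - e \<le> z"
  shows "kl_fun z \<le> (z - 1)^2 / (2 * (1 - e))"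
proof -
  define K where "K = 1 / (1 - e)"
  have "0 \<le> K * (z - 1)^2 / 2 - kl_fun z"
  proof (rule nonneg_if_derivative_changes_sign_at_1[where g = "\<lambda>s. K * (s - 1)^2 / 2 - kl_fun s"])
    show "0 < z" using assms by linarith
    show "((\<lambda>s. K * (s - 1)^2 / 2 - kl_fun s) has_real_derivative K * (s - 1) - ln s) (at s)"
      if "0 < s" for s
      using that by (auto intro!: derivative_eq_intros has_real_derivative_kl_fun)
    show "0 \<le> K * (s - 1) - ln s" if "1 \<le> s" for s
    proof -
      have "1 \<le> K" using assms by (simp add: K_def)
      then have "1 * (s - 1) \<le> K * (s - 1)" using that by (intro mult_right_mono) auto
      then show ?thesis using ln_le_minus_one[of s] that by simp
    qed
    show "K * (s - 1) - ln s \<le> 0" if "z \<le> s" "s \<le> 1" for s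
    proof -
      have "0 < s" "1 / s \<le> K" using assms that by (auto simp: K_def field_simps)
      then have "K * (s - 1) \<le> 1 / s * (s - 1)"
        using that by (intro mult_right_mono_neg) auto
      also have "\<dots> = 1 - 1 / s" using \<open>0 < s\<close> by (simp add: field_simps)
      finally have "K * (s - 1) \<le> 1 - 1 / s" .
      then show ?thesis using one_minus_inverse_le_ln[OF \<open>0 < s\<close>] by simp
    qed
  qed (simp add: kl_fun_def)
  then show ?thesis by (simp add: K_def mult.commute)
qed

lemma kl_fun_ge_square:
  assumes "0 < z"
  shows "(z - 1)^2 / (2 * max z 1) \<le> kl_fun z"
proof -
  define L where "L = 1 / max z 1"
  have "0 \<le> kl_fun z - L * (z - 1)^2 / 2"
  proof (rule nonneg_if_derivative_changes_sign_at_1[where g = "\<lambda>s. kl_fun s - L * (s - 1)^2 / 2", OF assms])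
    show "((\<lambda>s. kl_fun s - L * (s - 1)^2 / 2) has_real_derivative ln s - L * (s - 1)) (at s)"
      if "0 < s" for s
      using that by (auto intro!: derivative_eq_intros has_real_derivative_kl_fun)
    show "0 \<le> ln s - L * (s - 1)" if "1 \<le> s" "s \<le> z" for s
    proof -
      have "L \<le> 1 / s" using that by (simp add: L_def field_simps)
      then have "L * (s - 1) \<le> 1 / s * (s - 1)"
        using that by (intro mult_right_mono) auto
      also have "\<dots> = 1 - 1 / s" using that by (simp add: field_simps)
      finally have "L * (s - 1) \<le> 1 - 1 / s" .
      then show ?thesis using one_minus_inverse_le_ln[of s] that by simp
    qed
    show "ln s - L * (s - 1) \<le> 0" if "z \<le> s" "s \<le> 1" for s
    proof -
      have "L \<le> 1" by (simp add: L_def)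
      then have "1 * (s - 1) \<le> L * (s - 1)" using that by (intro mult_right_mono_neg) auto
      then show ?thesis using ln_le_minus_one[of s] that assms by simp
    qed
  qed (simp add: kl_fun_def)
  then show ?thesis by (simp add: L_def)
qed

lemma kl_fun_nonneg:
  assumes "0 \<le> z"
  shows "0 \<le> kl_fun z"
proof (cases "z = 0")
  case False
  then have "(z - 1)^2 / (2 * max z 1) \<le> kl_fun z" using assms by (intro kl_fun_ge_square) auto
  moreover have "0 \<le> (z - 1)^2 / (2 * max z 1)" by simp
  ultimately show ?thesis by linarith
qed (simp add: kl_fun_def)

lemma kl_fun_eq_0_iff: "0 \<le> z \<Longrightarrow> kl_fun z = 0 \<longleftrightarrow> z = 1"
proof
  assume "0 \<le> z" "kl_fun z = 0"
  then have "0 < z" by (cases "z = 0") (auto simp: kl_fun_def)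
  then have "(z - 1)^2 / (2 * max z 1) \<le> 0"
    using kl_fun_ge_square[of z] \<open>kl_fun z = 0\<close> by simp
  then show "z = 1" by (simp add: divide_le_0_iff)
qed (simp add: kl_fun_def)

lemma ennreal_mult_ln_plus_1:
  assumes "0 \<le> y"
  shows "ennreal (y * ln y) + 1 = ennreal (kl_fun y + y) + ennreal (- (y * ln y))"
proof -
  have eq: "kl_fun y + y = y * ln y + 1" by (simp add: kl_fun_def)
  show ?thesis
  proof (cases "0 \<le> y * ln y")
    case True
    then show ?thesis by (simp add: eq ennreal_neg ennreal_plus)
  next
    case False
    have "0 \<le> y * ln y + 1"
      using kl_fun_nonneg[OF assms] eq assms by linarith
    then have "ennreal (y * ln y + 1) + ennreal (- (y * ln y)) = 1"
      using False by (subst ennreal_plus[symmetric]) auto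
    then show ?thesis using False by (simp add: eq ennreal_neg)
  qed
qed

lemma chi2_mix_fun_nonneg: "0 \<le> t \<Longrightarrow> t \<le> 1 \<Longrightarrow> 0 \<le> y \<Longrightarrow> 0 \<le> chi2_mix_fun t y"
  unfolding chi2_mix_fun_def by simp

lemma chi2_mix_fun_eq_0_iff:
  assumes "0 \<le> t" "t < 1" "0 \<le> y"
  shows "chi2_mix_fun t y = 0 \<longleftrightarrow> y = 1"
proof -
  have "0 < 1 - t + t * y" using assms by (rule mixture_weight_pos)
  then show ?thesis using assms by (simp add: chi2_mix_fun_def)
qed

lemma chi2_mix_fun_le:
  assumes "0 < t" "t < 1" "0 \<le> y"
  shows "chi2_mix_fun t y \<le> y / t + 1"
proof -
  have r: "0 < 1 - t + t * y" using assms by (intro mixture_weight_pos) auto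
  have "(y / t + 1) * (1 - t + t * y) - (1 - t) * (y - 1)^2
      = y * (1 - t) / t + t * y^2 + t * y + 2 * (1 - t) * y"
    using assms by (simp add: field_simps power2_eq_square)
  moreover have "0 \<le> y * (1 - t) / t + t * y^2 + t * y + 2 * (1 - t) * y" using assms by simp
  ultimately have "(1 - t) * (y - 1)^2 \<le> (y / t + 1) * (1 - t + t * y)" by linarith
  then show ?thesis using r unfolding chi2_mix_fun_def by (simp add: divide_le_eq)
qed

lemma nn_integral_chi2_mix_fun:
  assumes "0 \<le> y"
  shows "(\<integral>\<^sup>+t. ennreal (chi2_mix_fun t y) * indicator {0<..<1} t \<partial>lborel) = ennreal (kl_fun y)"
proof (cases "y = 0")
  case True
  have "(\<integral>\<^sup>+t. ennreal (chi2_mix_fun t y) * indicator {0<..<1} t \<partial>lborel)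
      = (\<integral>\<^sup>+t. indicator {0<..<1::real} t \<partial>lborel)"
    by (intro nn_integral_cong) (auto simp: chi2_mix_fun_def True split: split_indicator)
  then show ?thesis by (simp add: True kl_fun_def)
next
  case False
  define F where "F t = y * ln (1 - t + t * y) - (y - 1) * t" for t
  have F': "(F has_real_derivative chi2_mix_fun t y) (at t)" if "t \<in> {0..1}" for t
  proof -
    have r: "0 < 1 - t + t * y"
      using that False assms by (cases "t = 1") (auto simp: add_pos_nonneg)
    have "(F has_real_derivative y * ((y - 1) / (1 - t + t * y)) - (y - 1)) (at t)"
      unfolding F_def using r by (auto intro!: derivative_eq_intros simp: field_simps)
    also have "y * ((y - 1) / (1 - t + t * y)) - (y - 1) = chi2_mix_fun t y"
      using r by (simp add: chi2_mix_fun_def field_simps power2_eq_square)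
    finally show ?thesis .
  qed
  have "(\<integral>\<^sup>+t. ennreal (chi2_mix_fun t y) * indicator {0<..<1} t \<partial>lborel)
      = (\<integral>\<^sup>+t. ennreal (chi2_mix_fun t y) * indicator {0..1} t \<partial>lborel)"
    by (intro nn_integral_cong_AE eventually_mono[OF AE_conjI[OF AE_lborel_singleton[of 0] AE_lborel_singleton[of 1]]])
       (auto split: split_indicator)
  also have "\<dots> = F 1 - F 0"
    by (rule nn_integral_FTC_Icc) (auto intro: F' chi2_mix_fun_nonneg assms)
  also have "F 1 - F 0 = kl_fun y" by (simp add: F_def kl_fun_def algebra_simps)
  finally show ?thesis .
qed

section \<open>Divergences of densities\<close>

lemma prob_space_density_real:
  assumes "prob_space Q" "f \<in> borel_measurable Q" "(\<integral>\<^sup>+x. ennreal (f x) \<partial>Q) = 1"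
  shows "prob_space (density Q (\<lambda>x. ennreal (f x)))"
  using assms by (intro prob_spaceI) (simp add: emeasure_density cong: nn_integral_cong)

lemma real_density_of_absolutely_continuous:
  assumes "prob_space Q" "prob_space P" "sets P = sets Q" "absolutely_continuous Q P"
  obtains f where "f \<in> borel_measurable Q" "\<And>x. 0 \<le> f x" "(\<integral>\<^sup>+x. ennreal (f x) \<partial>Q) = 1"
    "P = density Q (\<lambda>x. ennreal (f x))"
proof
  interpret Q: prob_space Q by fact
  interpret P: prob_space P by fact
  define f where "f x = enn2real (RN_deriv Q P x)" for x
  show f_measurable: "f \<in> borel_measurable Q" unfolding f_def by measurable
  show "0 \<le> f x" for x by (simp add: f_def)
  have "AE x in Q. RN_deriv Q P x \<noteq> \<infinity>"
    using assms by (intro Q.RN_deriv_finite) unfold_locales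
  then have "density Q (RN_deriv Q P) = density Q (\<lambda>x. ennreal (f x))"
    by (intro density_cong) (auto simp: f_def less_top elim!: eventually_mono)
  then show P_eq: "P = density Q (\<lambda>x. ennreal (f x))"
    using Q.density_RN_deriv assms by simp
  show "(\<integral>\<^sup>+x. ennreal (f x) \<partial>Q) = 1"
    using P.emeasure_space_1 f_measurable by (simp add: P_eq emeasure_density cong: nn_integral_cong)
qed

lemma absolutely_continuous_if_kl_div_finite: "kl_div P Q < \<infinity> \<Longrightarrow> absolutely_continuous Q P"
  unfolding kl_div_def by (auto split: if_splits)

lemma absolutely_continuous_if_chi2_div_finite: "chi2_div P Q < \<infinity> \<Longrightarrow> absolutely_continuous Q P"
  unfolding chi2_div_def by (auto split: if_splits)

lemma nn_integral_RN_deriv_density: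
  assumes "sigma_finite_measure Q" "f \<in> borel_measurable Q" "\<And>x. 0 \<le> f x"
    and [measurable]: "g \<in> borel_measurable borel"
  shows "(\<integral>\<^sup>+x. ennreal (g (enn2real (RN_deriv Q (density Q (\<lambda>x. ennreal (f x))) x))) \<partial>density Q (\<lambda>x. ennreal (f x)))
    = (\<integral>\<^sup>+x. ennreal (f x * g (f x)) \<partial>Q)"
proof -
  interpret sigma_finite_measure Q by fact
  let ?P = "density Q (\<lambda>x. ennreal (f x))"
  have "AE x in Q. ennreal (f x) = RN_deriv Q ?P x"
    using assms by (intro RN_deriv_unique) auto
  then have "AE x in ?P. enn2real (RN_deriv Q ?P x) = f x"
    by (intro absolutely_continuous_AE[OF _ absolutely_continuousI_density])
       (auto simp: assms elim!: eventually_mono dest!: sym[of "ennreal _"])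
  then have "(\<integral>\<^sup>+x. ennreal (g (enn2real (RN_deriv Q ?P x))) \<partial>?P) = (\<integral>\<^sup>+x. ennreal (g (f x)) \<partial>?P)"
    by (intro nn_integral_cong_AE) (auto elim!: eventually_mono)
  also have "\<dots> = (\<integral>\<^sup>+x. ennreal (f x * g (f x)) \<partial>Q)"
    using assms by (subst nn_integral_density) (auto simp: ennreal_mult')
  finally show ?thesis .
qed

lemma kl_div_density:
  assumes "prob_space Q" and [measurable]: "f \<in> borel_measurable Q" and f_nonneg: "\<And>x. 0 \<le> f x"
    and f_int: "(\<integral>\<^sup>+x. ennreal (f x) \<partial>Q) = 1"
  shows "kl_div (density Q (\<lambda>x. ennreal (f x))) Q = enn2ereal (\<integral>\<^sup>+x. ennreal (kl_fun (f x)) \<partial>Q)"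
proof -
  interpret prob_space Q by fact
  txt \<open>\<open>kl_div\<close> integrates the positive and negative parts of \<open>ln (dP/dQ)\<close> separately; the
    negative part contributes at most 1 since \<open>y ln y \<ge> y - 1\<close>.\<close>
  define A where "A = (\<integral>\<^sup>+x. ennreal (f x * ln (f x)) \<partial>Q)"
  define B where "B = (\<integral>\<^sup>+x. ennreal (- (f x * ln (f x))) \<partial>Q)"
  define W where "W = (\<integral>\<^sup>+x. ennreal (kl_fun (f x)) \<partial>Q)"
  have "A + 1 = (\<integral>\<^sup>+x. ennreal (f x * ln (f x)) + 1 \<partial>Q)"
    by (simp add: A_def nn_integral_add emeasure_space_1)
  also have "\<dots> = (\<integral>\<^sup>+x. ennreal (kl_fun (f x)) + ennreal (f x) + ennreal (- (f x * ln (f x))) \<partial>Q)"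
    by (intro nn_integral_cong) (simp only: ennreal_mult_ln_plus_1 f_nonneg ennreal_plus[OF kl_fun_nonneg[OF f_nonneg] f_nonneg])
  also have "\<dots> = W + (\<integral>\<^sup>+x. ennreal (f x) \<partial>Q) + B"
    unfolding W_def B_def by (simp add: nn_integral_add)
  finally have "1 + A = 1 + (W + B)"
    by (simp add: f_int ac_simps)
  then have "A = W + B"
    by (simp add: ennreal_add_left_cancel)
  moreover have "B < \<infinity>"
  proof -
    have "- (f x * ln (f x)) \<le> 1" for x
      using kl_fun_nonneg[OF f_nonneg[of x]] f_nonneg[of x] by (simp add: kl_fun_def)
    then have "B \<le> (\<integral>\<^sup>+x. 1 \<partial>Q)"
      unfolding B_def by (intro nn_integral_mono) (simp add: ennreal_le_1)
    then show ?thesis by (simp add: emeasure_space_1 le_less_trans)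
  qed
  ultimately have "enn2ereal A - enn2ereal B = enn2ereal W"
    by (simp add: plus_ennreal.rep_eq ereal_add_diff_cancel enn2ereal_nonneg)
  moreover have "absolutely_continuous Q (density Q (\<lambda>x. ennreal (f x)))"
    by (rule absolutely_continuousI_density) simp
  ultimately show ?thesis
    using nn_integral_RN_deriv_density[of Q f ln] nn_integral_RN_deriv_density[of Q f "\<lambda>y. - ln y"]
    by (simp add: kl_div_def A_def B_def W_def f_nonneg prob_space_imp_sigma_finite \<open>prob_space Q\<close>)
qed

lemma chi2_div_density:
  assumes "prob_space Q" and [measurable]: "f \<in> borel_measurable Q" and f_nonneg: "\<And>x. 0 \<le> f x"
    and f_int: "(\<integral>\<^sup>+x. ennreal (f x) \<partial>Q) = 1"
  shows "chi2_div (density Q (\<lambda>x. ennreal (f x))) Q = enn2ereal (\<integral>\<^sup>+x. ennreal ((f x - 1)^2) \<partial>Q)"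
proof -
  interpret prob_space Q by fact
  define P where "P = density Q (\<lambda>x. ennreal (f x))"
  have "AE x in Q. ennreal (f x) = RN_deriv Q P x"
    unfolding P_def by (rule RN_deriv_unique) auto
  then have "(\<integral>\<^sup>+x. (RN_deriv Q P x)\<^sup>2 \<partial>Q) = (\<integral>\<^sup>+x. ennreal ((f x)^2) \<partial>Q)"
    by (intro nn_integral_cong_AE) (auto elim!: eventually_mono simp: ennreal_power f_nonneg dest!: sym[of "ennreal _"])
  also have "\<dots> = (\<integral>\<^sup>+x. ennreal ((f x - 1)^2) \<partial>Q) + 1"
  proof -
    have "ennreal ((f x - 1)^2) + 2 * ennreal (f x) = ennreal ((f x)^2) + 1" for x
    proof -
      have "ennreal ((f x - 1)^2) + 2 * ennreal (f x) = ennreal ((f x - 1)^2 + 2 * f x)"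
        using f_nonneg[of x] by (simp add: ennreal_plus ennreal_mult)
      also have "(f x - 1)^2 + 2 * f x = (f x)^2 + 1" by (simp add: power2_eq_square algebra_simps)
      finally show ?thesis by (simp add: ennreal_plus)
    qed
    then have "(\<integral>\<^sup>+x. ennreal ((f x - 1)^2) \<partial>Q) + 2 = (\<integral>\<^sup>+x. ennreal ((f x)^2) \<partial>Q) + 1"
      using nn_integral_add[of "\<lambda>x. ennreal ((f x - 1)^2)" Q "\<lambda>x. 2 * ennreal (f x)"]
        nn_integral_add[of "\<lambda>x. ennreal ((f x)^2)" Q "\<lambda>_. 1"]
      by (simp add: nn_integral_cmult f_int emeasure_space_1)
    then have "1 + (\<integral>\<^sup>+x. ennreal ((f x)^2) \<partial>Q) = 1 + ((\<integral>\<^sup>+x. ennreal ((f x - 1)^2) \<partial>Q) + 1)"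
      by (simp add: ac_simps flip: one_add_one)
    then show ?thesis by (simp add: ennreal_add_left_cancel)
  qed
  finally have "enn2ereal (\<integral>\<^sup>+x. (RN_deriv Q P x)\<^sup>2 \<partial>Q) - 1 = enn2ereal (\<integral>\<^sup>+x. ennreal ((f x - 1)^2) \<partial>Q)"
    by (simp add: plus_ennreal.rep_eq one_ennreal.rep_eq ereal_add_diff_cancel)
  moreover have "absolutely_continuous Q P"
    unfolding P_def by (rule absolutely_continuousI_density) simp
  ultimately show ?thesis by (simp add: chi2_div_def P_def)
qed

lemma chi2_div_density_density:
  assumes "prob_space Q" and [measurable]: "f \<in> borel_measurable Q" "r \<in> borel_measurable Q"
    and f_nonneg: "\<And>x. 0 \<le> f x" and r_pos: "\<And>x. 0 < r x"
    and f_int: "(\<integral>\<^sup>+x. ennreal (f x) \<partial>Q) = 1" and r_int: "(\<integral>\<^sup>+x. ennreal (r x) \<partial>Q) = 1"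
  shows "chi2_div (density Q (\<lambda>x. ennreal (f x))) (density Q (\<lambda>x. ennreal (r x)))
    = enn2ereal (\<integral>\<^sup>+x. ennreal ((f x - r x)^2 / r x) \<partial>Q)"
proof -
  define R where "R = density Q (\<lambda>x. ennreal (r x))"
  have R: "prob_space R"
    unfolding R_def by (rule prob_space_density_real) (use assms in auto)
  have r_mult: "ennreal (r x) * ennreal (f x / r x) = ennreal (f x)" for x
    using r_pos[of x] f_nonneg[of x] by (simp flip: ennreal_mult)
  have "density R (\<lambda>x. ennreal (f x / r x)) = density Q (\<lambda>x. ennreal (f x))"
    unfolding R_def by (subst density_density_eq) (auto simp: r_mult)
  moreover have "(\<integral>\<^sup>+x. ennreal (f x / r x) \<partial>R) = 1"
    unfolding R_def by (subst nn_integral_density) (auto simp: r_mult f_int)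
  ultimately have "chi2_div (density Q (\<lambda>x. ennreal (f x))) R
      = enn2ereal (\<integral>\<^sup>+x. ennreal ((f x / r x - 1)^2) \<partial>R)"
    using chi2_div_density[OF R, of "\<lambda>x. f x / r x"] f_nonneg r_pos
    by (simp add: R_def less_imp_le)
  also have "(\<integral>\<^sup>+x. ennreal ((f x / r x - 1)^2) \<partial>R) = (\<integral>\<^sup>+x. ennreal ((f x - r x)^2 / r x) \<partial>Q)"
  proof -
    have "r x * (f x / r x - 1)^2 = (f x - r x)^2 / r x" for x
      using r_pos[of x] by (simp add: field_simps power2_eq_square)
    then show ?thesis
      unfolding R_def using r_pos by (subst nn_integral_density) (auto simp: less_imp_le simp flip: ennreal_mult)
  qed
  finally show ?thesis by (simp add: R_def)
qed

lemma nn_integral_mixture_eq_1: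
  assumes "prob_space Q" "f \<in> borel_measurable Q" "\<And>x. 0 \<le> f x"
    and "(\<integral>\<^sup>+x. ennreal (f x) \<partial>Q) = 1" and "0 \<le> t" "t \<le> 1"
  shows "(\<integral>\<^sup>+x. ennreal (1 - t + t * f x) \<partial>Q) = 1"
proof -
  interpret prob_space Q by fact
  have "(\<integral>\<^sup>+x. ennreal (1 - t + t * f x) \<partial>Q) = (\<integral>\<^sup>+x. ennreal (1 - t) + ennreal t * ennreal (f x) \<partial>Q)"
    using assms by (intro nn_integral_cong) (simp add: ennreal_plus ennreal_mult)
  also have "\<dots> = ennreal (1 - t) + ennreal t"
    using assms by (simp add: nn_integral_add nn_integral_cmult emeasure_space_1)
  also have "\<dots> = 1" using assms by (simp flip: ennreal_plus)
  finally show ?thesis .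
qed

lemma chi2_div_density_mixture:
  assumes "prob_space Q" and [measurable]: "f \<in> borel_measurable Q" and f_nonneg: "\<And>x. 0 \<le> f x"
    and f_int: "(\<integral>\<^sup>+x. ennreal (f x) \<partial>Q) = 1" and t: "0 \<le> t" "t < 1"
  shows "chi2_div (density Q (\<lambda>x. ennreal (f x))) (density Q (\<lambda>x. ennreal (1 - t + t * f x)))
    = enn2ereal (ennreal (1 - t) * (\<integral>\<^sup>+x. ennreal (chi2_mix_fun t (f x)) \<partial>Q))"
proof -
  have r_pos: "0 < 1 - t + t * f x" for x
    using t f_nonneg[of x] by (rule mixture_weight_pos)
  have "(f x - (1 - t + t * f x))^2 / (1 - t + t * f x) = (1 - t) * chi2_mix_fun t (f x)" for x
    by (simp add: chi2_mix_fun_def power2_eq_square algebra_simps)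
  then have "(\<integral>\<^sup>+x. ennreal ((f x - (1 - t + t * f x))^2 / (1 - t + t * f x)) \<partial>Q)
      = ennreal (1 - t) * (\<integral>\<^sup>+x. ennreal (chi2_mix_fun t (f x)) \<partial>Q)"
    using t f_nonneg chi2_mix_fun_nonneg
    by (simp add: ennreal_mult nn_integral_cmult)
  moreover have "(\<integral>\<^sup>+x. ennreal (1 - t + t * f x) \<partial>Q) = 1"
    using assms by (intro nn_integral_mixture_eq_1) auto
  ultimately show ?thesis
    using chi2_div_density_density[OF assms(1,2) _ f_nonneg r_pos f_int] by simp
qed

lemma nn_integral_chi2_mix_fun_less_top:
  assumes "prob_space Q" and [measurable]: "f \<in> borel_measurable Q" and f_nonneg: "\<And>x. 0 \<le> f x"
    and f_int: "(\<integral>\<^sup>+x. ennreal (f x) \<partial>Q) = 1" and t: "0 < t" "t < 1"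
  shows "(\<integral>\<^sup>+x. ennreal (chi2_mix_fun t (f x)) \<partial>Q) < top"
proof -
  interpret prob_space Q by fact
  have "(\<integral>\<^sup>+x. ennreal (chi2_mix_fun t (f x)) \<partial>Q) \<le> (\<integral>\<^sup>+x. ennreal (1 / t) * ennreal (f x) + 1 \<partial>Q)"
  proof (intro nn_integral_mono)
    fix x
    have "ennreal (chi2_mix_fun t (f x)) \<le> ennreal (1 / t * f x + 1)"
      using chi2_mix_fun_le[OF t f_nonneg[of x]] by (intro ennreal_leI) simp
    then show "ennreal (chi2_mix_fun t (f x)) \<le> ennreal (1 / t) * ennreal (f x) + 1"
      using t f_nonneg[of x] by (simp add: ennreal_plus divide_ennreal flip: ennreal_mult)
  qed
  also have "\<dots> = ennreal (1 / t) + 1"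
    by (simp add: nn_integral_add nn_integral_cmult f_int emeasure_space_1)
  finally show ?thesis by (simp add: le_less_trans)
qed

lemma nn_integral_eq_0_iff_AE_eq_1:
  assumes [measurable]: "\<phi> \<in> borel_measurable borel" "f \<in> borel_measurable M"
    and "\<And>x. 0 \<le> f x" and "\<And>y. 0 \<le> y \<Longrightarrow> 0 \<le> \<phi> y"
    and "\<And>y. 0 \<le> y \<Longrightarrow> \<phi> y = 0 \<longleftrightarrow> y = 1"
  shows "(\<integral>\<^sup>+x. ennreal (\<phi> (f x)) \<partial>M) = 0 \<longleftrightarrow> (AE x in M. f x = 1)"
proof -
  have "(\<integral>\<^sup>+x. ennreal (\<phi> (f x)) \<partial>M) = 0 \<longleftrightarrow> (AE x in M. ennreal (\<phi> (f x)) = 0)"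
    by (rule nn_integral_0_iff_AE) measurable
  also have "\<dots> \<longleftrightarrow> (AE x in M. f x = 1)"
    using assms(3-5) by (intro AE_cong) (metis ennreal_eq_0_iff order_antisym)
  finally show ?thesis .
qed

lemma nn_integral_kl_fun_eq_chi2_mix_fun:
  assumes "sigma_finite_measure Q" and [measurable]: "h \<in> borel_measurable Q" and "\<And>y. 0 \<le> h y"
  shows "(\<integral>\<^sup>+y. ennreal (kl_fun (h y)) \<partial>Q)
    = (\<integral>\<^sup>+t. indicator {0<..<1} t * (\<integral>\<^sup>+y. ennreal (chi2_mix_fun t (h y)) \<partial>Q) \<partial>lborel)"
proof -
  interpret Q: sigma_finite_measure Q by fact
  interpret pair_sigma_finite lborel Q ..
  have [measurable]: "(\<lambda>(t, y). ennreal (chi2_mix_fun t (h y)) * indicator {0<..<1} t) \<in> borel_measurable (lborel \<Otimes>\<^sub>M Q)"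
    unfolding chi2_mix_fun_def by measurable
  have "(\<integral>\<^sup>+y. ennreal (kl_fun (h y)) \<partial>Q)
      = (\<integral>\<^sup>+y. (\<integral>\<^sup>+t. ennreal (chi2_mix_fun t (h y)) * indicator {0<..<1} t \<partial>lborel) \<partial>Q)"
    using assms by (simp add: nn_integral_chi2_mix_fun)
  also have "\<dots> = (\<integral>\<^sup>+t. (\<integral>\<^sup>+y. ennreal (chi2_mix_fun t (h y)) * indicator {0<..<1} t \<partial>Q) \<partial>lborel)"
    by (rule Fubini') measurable
  also have "\<dots> = (\<integral>\<^sup>+t. indicator {0<..<1} t * (\<integral>\<^sup>+y. ennreal (chi2_mix_fun t (h y)) \<partial>Q) \<partial>lborel)"
    by (intro nn_integral_cong) (auto split: split_indicator)
  finally show ?thesis .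
qed

lemma nn_integral_kl_fun_mixture_le:
  assumes [measurable]: "f \<in> borel_measurable M" and "\<And>x. 0 \<le> f x" and e: "0 < e" "e < 1"
  shows "(\<integral>\<^sup>+x. ennreal (kl_fun (1 - e + e * f x)) \<partial>M)
    \<le> ennreal (e^2 / (2 * (1 - e))) * (\<integral>\<^sup>+x. ennreal ((f x - 1)^2) \<partial>M)"
proof -
  have "kl_fun (1 - e + e * f x) \<le> e^2 / (2 * (1 - e)) * (f x - 1)^2" for x
  proof -
    have "kl_fun (1 - e + e * f x) \<le> ((1 - e + e * f x) - 1)^2 / (2 * (1 - e))"
      using assms by (intro kl_fun_le_square) auto
    also have "((1 - e + e * f x) - 1)^2 = e^2 * (f x - 1)^2" by (simp add: power2_eq_square algebra_simps)
    finally show ?thesis by simp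
  qed
  then have "(\<integral>\<^sup>+x. ennreal (kl_fun (1 - e + e * f x)) \<partial>M)
      \<le> (\<integral>\<^sup>+x. ennreal (e^2 / (2 * (1 - e))) * ennreal ((f x - 1)^2) \<partial>M)"
    using e by (intro nn_integral_mono) (simp flip: ennreal_mult add: ennreal_leI)
  then show ?thesis by (simp add: nn_integral_cmult)
qed

lemma nn_integral_kl_fun_mixture_ge:
  assumes [measurable]: "f \<in> borel_measurable M" and "\<And>x. 0 \<le> f x" and e: "0 < e" "e < 1"
  shows "ennreal (e^2 / 2) * (\<integral>\<^sup>+x. ennreal ((f x - 1)^2 / (1 + e * max (f x - 1) 0)) \<partial>M)
    \<le> (\<integral>\<^sup>+x. ennreal (kl_fun (1 - e + e * f x)) \<partial>M)"
proof -
  have "e^2 / 2 * ((f x - 1)^2 / (1 + e * max (f x - 1) 0)) \<le> kl_fun (1 - e + e * f x)" for x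
  proof -
    have "0 < 1 - e + e * f x" using assms(2)[of x] e by (intro mixture_weight_pos) auto
    then have "((1 - e + e * f x) - 1)^2 / (2 * max (1 - e + e * f x) 1) \<le> kl_fun (1 - e + e * f x)"
      by (rule kl_fun_ge_square)
    moreover have "((1 - e + e * f x) - 1)^2 = e^2 * (f x - 1)^2" by (simp add: power2_eq_square algebra_simps)
    moreover have "max (1 - e + e * f x) 1 = 1 + e * max (f x - 1) 0"
      using e by (auto simp: max_def algebra_simps mult_le_cancel_left)
    ultimately show ?thesis by simp
  qed
  then have "(\<integral>\<^sup>+x. ennreal (e^2 / 2) * ennreal ((f x - 1)^2 / (1 + e * max (f x - 1) 0)) \<partial>M)
      \<le> (\<integral>\<^sup>+x. ennreal (kl_fun (1 - e + e * f x)) \<partial>M)"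
    using e by (intro nn_integral_mono) (simp flip: ennreal_mult add: ennreal_leI)
  then show ?thesis by (simp add: nn_integral_cmult)
qed

lemma nn_integral_damped_square_le:
  assumes [measurable]: "f \<in> borel_measurable M" "h \<in> borel_measurable N"
    and "\<And>x. 0 \<le> f x" "\<And>y. 0 \<le> h y" and e: "0 < e" "e < 1"
    and kl_le: "(\<integral>\<^sup>+y. ennreal (kl_fun (1 - e + e * h y)) \<partial>N)
      \<le> (\<integral>\<^sup>+x. ennreal (kl_fun (1 - e + e * f x)) \<partial>M) * c"
  shows "(\<integral>\<^sup>+y. ennreal ((h y - 1)^2 / (1 + e * max (h y - 1) 0)) \<partial>N)
    \<le> ennreal (1 / (1 - e)) * ((\<integral>\<^sup>+x. ennreal ((f x - 1)^2) \<partial>M) * c)"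
proof -
  have "ennreal (e^2 / 2) * (\<integral>\<^sup>+y. ennreal ((h y - 1)^2 / (1 + e * max (h y - 1) 0)) \<partial>N)
      \<le> (\<integral>\<^sup>+y. ennreal (kl_fun (1 - e + e * h y)) \<partial>N)"
    using assms by (intro nn_integral_kl_fun_mixture_ge) auto
  also have "\<dots> \<le> ennreal (e^2 / (2 * (1 - e))) * (\<integral>\<^sup>+x. ennreal ((f x - 1)^2) \<partial>M) * c"
    using kl_le nn_integral_kl_fun_mixture_le[of f M e] assms by (meson mult_right_mono order_trans zero_le)
  also have "\<dots> = ennreal (e^2 / 2) * (ennreal (1 / (1 - e)) * ((\<integral>\<^sup>+x. ennreal ((f x - 1)^2) \<partial>M) * c))"
  proof -
    have factor: "ennreal (e^2 / 2) * ennreal (1 / (1 - e)) = ennreal (e^2 / (2 * (1 - e)))"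
      using e by (subst ennreal_mult[symmetric]) auto
    show ?thesis by (simp only: mult.assoc flip: factor)
  qed
  finally show ?thesis using e by (simp add: ennreal_mult_le_mult_iff)
qed

lemma tendsto_nn_integral_divide_one_plus:
  assumes [measurable]: "a \<in> borel_measurable M" "d \<in> borel_measurable M"
    and a: "\<And>x. 0 \<le> a x" and d: "\<And>x. 0 \<le> d x"
    and e: "e \<longlonglongrightarrow> 0" "decseq e" "\<And>n. 0 \<le> e n"
  shows "(\<lambda>n. \<integral>\<^sup>+x. ennreal (a x / (1 + e n * d x)) \<partial>M) \<longlonglongrightarrow> (\<integral>\<^sup>+x. ennreal (a x) \<partial>M)"
proof (rule nn_integral_LIMSEQ)
  show "incseq (\<lambda>n x. ennreal (a x / (1 + e n * d x)))"
    unfolding incseq_def le_fun_def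
  proof (intro allI impI ennreal_leI)
    fix m n :: nat and x assume "m \<le> n"
    then have "e n * d x \<le> e m * d x" using e(2) d[of x] by (intro mult_right_mono) (auto simp: decseq_def)
    then show "a x / (1 + e m * d x) \<le> a x / (1 + e n * d x)"
      using a[of x] d[of x] e(3)[of n] e(3)[of m]
      by (intro divide_left_mono) (auto intro!: mult_pos_pos add_pos_nonneg)
  qed
  show "(\<lambda>n. ennreal (a x / (1 + e n * d x))) \<longlonglongrightarrow> ennreal (a x)" for x
  proof -
    have "(\<lambda>n. a x / (1 + e n * d x)) \<longlonglongrightarrow> a x / (1 + 0 * d x)"
      by (intro tendsto_intros e(1)) simp
    then show ?thesis by (intro tendsto_ennrealI) simp
  qed
qed measurable

section \<open>Markov kernels and mixtures\<close>

lemma measurable_emeasure_prob_kernel: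
  assumes "sets Q = sets X" "K \<in> X \<rightarrow>\<^sub>M prob_algebra Y" "A \<in> sets Y"
  shows "(\<lambda>x. emeasure (K x) A) \<in> borel_measurable Q"
  using assms measurable_emeasure_subprob_algebra[of A] measurable_prob_algebraD[of K]
  by (auto cong: measurable_cong_sets)

lemma emeasure_bind_density:
  assumes P: "density Q g \<in> space (prob_algebra X)" and K: "K \<in> X \<rightarrow>\<^sub>M prob_algebra Y"
    and [measurable]: "g \<in> borel_measurable Q" and A: "A \<in> sets Y"
  shows "emeasure (density Q g \<bind> K) A = (\<integral>\<^sup>+x. g x * emeasure (K x) A \<partial>Q)"
proof -
  have [measurable]: "(\<lambda>x. emeasure (K x) A) \<in> borel_measurable Q"
    using P K A by (intro measurable_emeasure_prob_kernel) (auto simp: space_prob_algebra)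
  show ?thesis
    by (simp add: emeasure_bind_prob_algebra[OF P K A] nn_integral_density)
qed

lemma absolutely_continuous_bind_density:
  assumes Q: "Q \<in> space (prob_algebra X)" and P: "density Q g \<in> space (prob_algebra X)"
    and K: "K \<in> X \<rightarrow>\<^sub>M prob_algebra Y" and [measurable]: "g \<in> borel_measurable Q"
  shows "absolutely_continuous (Q \<bind> K) (density Q g \<bind> K)"
  unfolding absolutely_continuous_def
proof
  fix A assume "A \<in> null_sets (Q \<bind> K)"
  then have A: "A \<in> sets Y" and "emeasure (Q \<bind> K) A = 0"
    using sets_bind'[OF Q K] by auto
  then have "(\<integral>\<^sup>+x. emeasure (K x) A \<partial>Q) = 0"
    using emeasure_bind_prob_algebra[OF Q K A] by simp
  moreover have [measurable]: "(\<lambda>x. emeasure (K x) A) \<in> borel_measurable Q"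
    using Q K A by (intro measurable_emeasure_prob_kernel) (auto simp: space_prob_algebra)
  ultimately have "AE x in Q. emeasure (K x) A = 0"
    by (simp add: nn_integral_0_iff_AE)
  then have "emeasure (density Q g \<bind> K) A = 0"
    by (simp add: emeasure_bind_density[OF P K _ A] nn_integral_0_iff_AE) (auto elim: eventually_mono)
  then show "A \<in> null_sets (density Q g \<bind> K)"
    using sets_bind'[OF P K] A by auto
qed

lemma density_mixture_in_prob_algebra:
  assumes Q: "Q \<in> space (prob_algebra X)" and "f \<in> borel_measurable Q" "\<And>x. 0 \<le> f x"
    and "(\<integral>\<^sup>+x. ennreal (f x) \<partial>Q) = 1" and "0 \<le> t" "t \<le> 1"
  shows "density Q (\<lambda>x. ennreal (1 - t + t * f x)) \<in> space (prob_algebra X)"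
proof -
  have "prob_space Q" using Q by (simp add: space_prob_algebra)
  then show ?thesis
    using prob_space_density_real[OF \<open>prob_space Q\<close> _ nn_integral_mixture_eq_1[OF \<open>prob_space Q\<close> assms(2-6)]]
      assms(2) Q by (simp add: space_prob_algebra)
qed

lemma bind_density_mixture:
  assumes Q: "Q \<in> space (prob_algebra X)" and K: "K \<in> X \<rightarrow>\<^sub>M prob_algebra Y"
    and [measurable]: "f \<in> borel_measurable Q" and f_nonneg: "\<And>x. 0 \<le> f x"
    and f_int: "(\<integral>\<^sup>+x. ennreal (f x) \<partial>Q) = 1"
    and [measurable]: "h \<in> borel_measurable (Q \<bind> K)" and h_nonneg: "\<And>y. 0 \<le> h y"
    and bind_eq: "density Q (\<lambda>x. ennreal (f x)) \<bind> K = density (Q \<bind> K) (\<lambda>y. ennreal (h y))"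
    and t: "0 \<le> t" "t \<le> 1"
  shows "density Q (\<lambda>x. ennreal (1 - t + t * f x)) \<bind> K = density (Q \<bind> K) (\<lambda>y. ennreal (1 - t + t * h y))"
proof -
  let ?Qt = "density Q (\<lambda>x. ennreal (1 - t + t * f x))"
  have Qt: "?Qt \<in> space (prob_algebra X)"
    using density_mixture_in_prob_algebra[OF Q _ f_nonneg f_int t] by simp
  have P: "density Q (\<lambda>x. ennreal (f x)) \<in> space (prob_algebra X)"
    using density_mixture_in_prob_algebra[OF Q _ f_nonneg f_int, of 1] by simp
  have mix: "ennreal (1 - t + t * y) = ennreal (1 - t) + ennreal t * ennreal y" if "0 \<le> y" for y
    using t that by (simp add: ennreal_plus ennreal_mult)
  show ?thesis
  proof (rule measure_eqI)
    show "sets (?Qt \<bind> K) = sets (density (Q \<bind> K) (\<lambda>y. ennreal (1 - t + t * h y)))"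
      using sets_bind'[OF Qt K] sets_bind'[OF Q K] by simp
    fix A assume "A \<in> sets (?Qt \<bind> K)"
    then have A: "A \<in> sets Y" using sets_bind'[OF Qt K] by simp
    then have [measurable]: "A \<in> sets (Q \<bind> K)" using sets_bind'[OF Q K] by simp
    have [measurable]: "(\<lambda>x. emeasure (K x) A) \<in> borel_measurable Q"
      using Q K A by (intro measurable_emeasure_prob_kernel) (auto simp: space_prob_algebra)
    have "emeasure (?Qt \<bind> K) A = (\<integral>\<^sup>+x. ennreal (1 - t + t * f x) * emeasure (K x) A \<partial>Q)"
      by (rule emeasure_bind_density[OF Qt K _ A]) simp
    also have "\<dots> = ennreal (1 - t) * (\<integral>\<^sup>+x. emeasure (K x) A \<partial>Q)
        + ennreal t * (\<integral>\<^sup>+x. ennreal (f x) * emeasure (K x) A \<partial>Q)"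
      by (simp add: mix f_nonneg distrib_right mult.assoc nn_integral_add nn_integral_cmult)
    also have "(\<integral>\<^sup>+x. emeasure (K x) A \<partial>Q) = (\<integral>\<^sup>+y. indicator A y \<partial>(Q \<bind> K))"
      by (simp add: emeasure_bind_prob_algebra[OF Q K A])
    also have "(\<integral>\<^sup>+x. ennreal (f x) * emeasure (K x) A \<partial>Q) = (\<integral>\<^sup>+y. ennreal (h y) * indicator A y \<partial>(Q \<bind> K))"
      using emeasure_bind_density[OF P K _ A] bind_eq by (simp add: emeasure_density)
    also have "ennreal (1 - t) * (\<integral>\<^sup>+y. indicator A y \<partial>(Q \<bind> K))
        + ennreal t * (\<integral>\<^sup>+y. ennreal (h y) * indicator A y \<partial>(Q \<bind> K))
        = (\<integral>\<^sup>+y. ennreal (1 - t + t * h y) * indicator A y \<partial>(Q \<bind> K))"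
      by (simp add: mix h_nonneg distrib_right mult.assoc nn_integral_add nn_integral_cmult)
    also have "\<dots> = emeasure (density (Q \<bind> K) (\<lambda>y. ennreal (1 - t + t * h y))) A"
      by (simp add: emeasure_density)
    finally show "emeasure (?Qt \<bind> K) A = emeasure (density (Q \<bind> K) (\<lambda>y. ennreal (1 - t + t * h y))) A" .
  qed
qed

lemma obtain_bind_densities:
  assumes Q: "Q \<in> space (prob_algebra X)" and P: "P \<in> space (prob_algebra X)"
    and K: "K \<in> X \<rightarrow>\<^sub>M prob_algebra Y" and "absolutely_continuous Q P"
  obtains f h where "f \<in> borel_measurable Q" "\<And>x. 0 \<le> f x" "(\<integral>\<^sup>+x. ennreal (f x) \<partial>Q) = 1"
    "P = density Q (\<lambda>x. ennreal (f x))"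
    "h \<in> borel_measurable (Q \<bind> K)" "\<And>y. 0 \<le> h y" "(\<integral>\<^sup>+y. ennreal (h y) \<partial>(Q \<bind> K)) = 1"
    "P \<bind> K = density (Q \<bind> K) (\<lambda>y. ennreal (h y))"
proof -
  have "prob_space Q" "prob_space P" "sets P = sets Q"
    using Q P by (auto simp: space_prob_algebra)
  then obtain f where f: "f \<in> borel_measurable Q" "\<And>x. 0 \<le> f x" "(\<integral>\<^sup>+x. ennreal (f x) \<partial>Q) = 1"
    and P_eq: "P = density Q (\<lambda>x. ennreal (f x))"
    using real_density_of_absolutely_continuous assms(4) by metis
  have "absolutely_continuous (Q \<bind> K) (P \<bind> K)"
    using absolutely_continuous_bind_density[OF Q _ K, of "\<lambda>x. ennreal (f x)"] P P_eq f(1) by simp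
  then obtain h where "h \<in> borel_measurable (Q \<bind> K)" "\<And>y. 0 \<le> h y"
    "(\<integral>\<^sup>+y. ennreal (h y) \<partial>(Q \<bind> K)) = 1" "P \<bind> K = density (Q \<bind> K) (\<lambda>y. ennreal (h y))"
    using real_density_of_absolutely_continuous[of "Q \<bind> K" "P \<bind> K"]
      prob_space_bind'[OF Q K] prob_space_bind'[OF P K] sets_bind'[OF Q K] sets_bind'[OF P K]
    by metis
  with f P_eq that show ?thesis by blast
qed

lemma not_point_mass_density:
  assumes Q: "Q \<in> space (prob_algebra X)" and "\<not> point_mass X Q"
    and [measurable]: "g \<in> borel_measurable Q" and g_ge: "\<And>x. c \<le> g x" and "0 < c"
  shows "\<not> point_mass X (density Q (\<lambda>x. ennreal (g x)))"
proof
  assume "point_mass X (density Q (\<lambda>x. ennreal (g x)))"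
  then obtain x where "x \<in> space X" and eq: "density Q (\<lambda>x. ennreal (g x)) = return X x"
    unfolding point_mass_def by auto
  have sets_Q: "sets Q = sets X" and "prob_space Q" using Q by (auto simp: space_prob_algebra)
  interpret prob_space Q by fact
  have null: "emeasure Q A = 0" if A: "A \<in> sets Q" "x \<notin> A" for A
  proof -
    have "ennreal c * emeasure Q A = (\<integral>\<^sup>+y. ennreal c * indicator A y \<partial>Q)"
      using A by (simp add: nn_integral_cmult_indicator)
    also have "\<dots> \<le> (\<integral>\<^sup>+y. ennreal (g y) * indicator A y \<partial>Q)"
      using g_ge by (intro nn_integral_mono) (auto split: split_indicator intro!: ennreal_leI)
    also have "\<dots> = emeasure (return X x) A"
      using A by (simp flip: eq add: emeasure_density)
    also have "\<dots> = 0" using A sets_Q by simp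
    finally show ?thesis using \<open>0 < c\<close> by simp
  qed
  have "Q = return X x"
  proof (rule measure_eqI)
    show "sets Q = sets (return X x)" using sets_Q by simp
    fix A assume A: "A \<in> sets Q"
    show "emeasure Q A = emeasure (return X x) A"
    proof (cases "x \<in> A")
      case True
      have "space Q - A \<in> null_sets Q" using A True null[of "space Q - A"] by auto
      then have "AE y in Q. y \<notin> space Q - A" using AE_iff_null_sets by blast
      with AE_space have "AE y in Q. y \<in> A" by eventually_elim auto
      then show ?thesis using True A sets_Q by (simp add: emeasure_eq_1_AE)
    qed (use null[OF A] A sets_Q in simp)
  qed
  then show False using assms(2) \<open>x \<in> space X\<close> unfolding point_mass_def by auto
qed

section \<open>Contraction coefficients\<close>

lemma zero_less_enn2ereal_iff: "0 < enn2ereal x \<longleftrightarrow> 0 < x"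
  by (simp add: zero_ennreal.rep_eq less_ennreal.rep_eq)

lemma enn2ereal_less_infinity_iff: "enn2ereal x < \<infinity> \<longleftrightarrow> x < top"
  by (metis enn2ereal_top less_ennreal.rep_eq)

text \<open>The contraction coefficients are \<open>-\<infinity>\<close> when every input distribution is a point mass
  (a supremum over the empty set), hence the sign condition.\<close>

lemma enn2ereal_le_mult_iff:
  fixes a b :: ennreal and c :: ereal
  assumes "0 < b" "b < top"
  shows "enn2ereal a \<le> enn2ereal b * c \<longleftrightarrow> 0 \<le> c \<and> a \<le> b * e2ennreal c"
proof (cases "0 \<le> c")
  case True
  then have "enn2ereal b * c = enn2ereal (b * e2ennreal c)"
    by (simp add: times_ennreal.rep_eq enn2ereal_e2ennreal)
  then show ?thesis using True by (simp add: less_eq_ennreal.rep_eq)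
next
  case False
  have "0 < enn2ereal b" "enn2ereal b < \<infinity>"
    using assms by (simp_all add: zero_less_enn2ereal_iff enn2ereal_less_infinity_iff)
  then have "enn2ereal b * c < 0" using False by (cases "enn2ereal b"; cases c) (auto simp: mult_pos_neg)
  then show ?thesis using False enn2ereal_nonneg[of a] by (meson leD order_trans)
qed

lemma divergence_bind_le_eta:
  assumes "Q \<in> space (prob_algebra X)" "\<not> point_mass X Q"
    and "P \<in> space (prob_algebra X)" "0 < DX P Q" "DX P Q < \<infinity>"
  shows "DY (P \<bind> K) (Q \<bind> K) \<le> DX P Q * eta DY DX X K"
proof -
  have "DY (P \<bind> K) (Q \<bind> K) / DX P Q \<le> eta_at DY DX X K Q"
    unfolding eta_at_def by (rule SUP_upper) (use assms in auto)
  also have "\<dots> \<le> eta DY DX X K"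
    unfolding eta_def by (rule SUP_upper) (use assms in auto)
  finally show ?thesis using assms by (simp add: ereal_divide_le_pos)
qed

lemma eta_at_leI:
  assumes "\<And>P. P \<in> space (prob_algebra X) \<Longrightarrow> 0 < DX P Q \<Longrightarrow> DX P Q < \<infinity>
      \<Longrightarrow> DY (P \<bind> K) (Q \<bind> K) \<le> DX P Q * c"
  shows "eta_at DY DX X K Q \<le> c"
  unfolding eta_at_def by (rule SUP_least) (use assms in \<open>auto simp: ereal_divide_le_pos\<close>)

lemma chi2_mixture_contraction:
  assumes K: "K \<in> X \<rightarrow>\<^sub>M prob_algebra Y" and Q: "Q \<in> space (prob_algebra X)" and Q_npm: "\<not> point_mass X Q"
    and [measurable]: "f \<in> borel_measurable Q" and f_nonneg: "\<And>x. 0 \<le> f x"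
    and f_int: "(\<integral>\<^sup>+x. ennreal (f x) \<partial>Q) = 1" and f_not_1: "\<not> (AE x in Q. f x = 1)"
    and [measurable]: "h \<in> borel_measurable (Q \<bind> K)" and h_nonneg: "\<And>y. 0 \<le> h y"
    and h_int: "(\<integral>\<^sup>+y. ennreal (h y) \<partial>(Q \<bind> K)) = 1"
    and bind_eq: "density Q (\<lambda>x. ennreal (f x)) \<bind> K = density (Q \<bind> K) (\<lambda>y. ennreal (h y))"
    and t: "0 < t" "t < 1"
  shows "0 \<le> eta_chi2 X K"
    and "(\<integral>\<^sup>+y. ennreal (chi2_mix_fun t (h y)) \<partial>(Q \<bind> K))
      \<le> (\<integral>\<^sup>+x. ennreal (chi2_mix_fun t (f x)) \<partial>Q) * e2ennreal (eta_chi2 X K)"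
proof -
  have "prob_space Q" using Q by (simp add: space_prob_algebra)
  have QK: "prob_space (Q \<bind> K)" by (rule prob_space_bind'[OF Q K])
  let ?P = "density Q (\<lambda>x. ennreal (f x))"
  let ?Qt = "density Q (\<lambda>x. ennreal (1 - t + t * f x))"
  define F where "F = (\<integral>\<^sup>+x. ennreal (chi2_mix_fun t (f x)) \<partial>Q)"
  define H where "H = (\<integral>\<^sup>+y. ennreal (chi2_mix_fun t (h y)) \<partial>(Q \<bind> K))"
  have P: "?P \<in> space (prob_algebra X)"
    using density_mixture_in_prob_algebra[OF Q _ f_nonneg f_int, of 1] by simp
  have Qt: "?Qt \<in> space (prob_algebra X)"
    using density_mixture_in_prob_algebra[OF Q _ f_nonneg f_int, of t] t by simp
  have Qt_npm: "\<not> point_mass X ?Qt"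
    using t f_nonneg by (intro not_point_mass_density[OF Q Q_npm, of _ "1 - t"]) auto
  have chi2_P: "chi2_div ?P ?Qt = enn2ereal (ennreal (1 - t) * F)"
    unfolding F_def using t by (intro chi2_div_density_mixture) (auto simp: f_nonneg f_int \<open>prob_space Q\<close>)
  have "chi2_div (?P \<bind> K) (?Qt \<bind> K) = enn2ereal (ennreal (1 - t) * H)"
    using bind_density_mixture[OF Q K _ f_nonneg f_int _ h_nonneg bind_eq, of t]
      chi2_div_density_mixture[OF QK _ h_nonneg h_int, of t] bind_eq t
    by (simp add: H_def)
  moreover have "0 < F"
    using f_not_1 nn_integral_eq_0_iff_AE_eq_1[of "chi2_mix_fun t" f Q] t f_nonneg
      chi2_mix_fun_nonneg chi2_mix_fun_eq_0_iff
    by (auto simp: F_def zero_less_iff_neq_zero)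
  moreover have "F < top"
    unfolding F_def using t by (intro nn_integral_chi2_mix_fun_less_top) (auto simp: f_nonneg f_int \<open>prob_space Q\<close>)
  ultimately have pos_fin: "0 < ennreal (1 - t) * F" "ennreal (1 - t) * F < top"
    and chi2_PK: "chi2_div (?P \<bind> K) (?Qt \<bind> K) = enn2ereal (ennreal (1 - t) * H)"
    using t by (auto simp: ennreal_mult_less_top zero_less_iff_neq_zero)
  have "chi2_div (?P \<bind> K) (?Qt \<bind> K) \<le> chi2_div ?P ?Qt * eta_chi2 X K"
    unfolding eta_chi2_def using pos_fin chi2_P
    by (intro divergence_bind_le_eta[OF Qt Qt_npm P])
       (auto simp: zero_less_enn2ereal_iff enn2ereal_less_infinity_iff)
  then have "0 \<le> eta_chi2 X K \<and> ennreal (1 - t) * H \<le> ennreal (1 - t) * (F * e2ennreal (eta_chi2 X K))"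
    using chi2_P chi2_PK enn2ereal_le_mult_iff[OF pos_fin]
    by (simp add: mult.assoc)
  then show "0 \<le> eta_chi2 X K" and "H \<le> F * e2ennreal (eta_chi2 X K)"
    using t by (simp_all add: ennreal_mult_le_mult_iff)
qed

lemma eta_at_kl_le_eta_chi2:
  assumes K: "K \<in> X \<rightarrow>\<^sub>M prob_algebra Y" and Q: "Q \<in> space (prob_algebra X)" and Q_npm: "\<not> point_mass X Q"
  shows "eta_at kl_div kl_div X K Q \<le> eta_chi2 X K"
proof (rule eta_at_leI)
  fix P assume P: "P \<in> space (prob_algebra X)" and pos: "0 < kl_div P Q" and fin: "kl_div P Q < \<infinity>"
  obtain f h where f_meas[measurable]: "f \<in> borel_measurable Q" and f_nonneg: "\<And>x. 0 \<le> f x"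
    and f_int: "(\<integral>\<^sup>+x. ennreal (f x) \<partial>Q) = 1" and P_eq: "P = density Q (\<lambda>x. ennreal (f x))"
    and h_meas[measurable]: "h \<in> borel_measurable (Q \<bind> K)" and h_nonneg: "\<And>y. 0 \<le> h y"
    and h_int: "(\<integral>\<^sup>+y. ennreal (h y) \<partial>(Q \<bind> K)) = 1"
    and PK_eq: "P \<bind> K = density (Q \<bind> K) (\<lambda>y. ennreal (h y))"
    using obtain_bind_densities[OF Q P K absolutely_continuous_if_kl_div_finite[OF fin]] by metis
  have "prob_space Q" using Q by (simp add: space_prob_algebra)
  interpret Q: prob_space Q by fact
  have QK: "prob_space (Q \<bind> K)" by (rule prob_space_bind'[OF Q K])
  define WF where "WF = (\<integral>\<^sup>+x. ennreal (kl_fun (f x)) \<partial>Q)"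
  define WH where "WH = (\<integral>\<^sup>+y. ennreal (kl_fun (h y)) \<partial>(Q \<bind> K))"
  have kl_P: "kl_div P Q = enn2ereal WF"
    unfolding P_eq WF_def by (rule kl_div_density) (auto simp: f_nonneg f_int \<open>prob_space Q\<close>)
  have kl_PK: "kl_div (P \<bind> K) (Q \<bind> K) = enn2ereal WH"
    unfolding PK_eq WH_def by (rule kl_div_density) (auto simp: h_nonneg h_int QK)
  have WF_pos_fin: "0 < WF" "WF < top"
    using pos fin kl_P by (simp_all add: zero_less_enn2ereal_iff enn2ereal_less_infinity_iff less_top)
  have f_not_1: "\<not> (AE x in Q. f x = 1)"
    using WF_pos_fin(1) nn_integral_eq_0_iff_AE_eq_1[of kl_fun f Q] f_nonneg kl_fun_nonneg kl_fun_eq_0_iff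
    by (auto simp: WF_def)
  note contraction = chi2_mixture_contraction[OF K Q Q_npm f_meas f_nonneg f_int f_not_1 h_meas h_nonneg h_int,
      folded P_eq, OF PK_eq]
  have [measurable]: "(\<lambda>t. \<integral>\<^sup>+x. ennreal (chi2_mix_fun t (f x)) \<partial>Q) \<in> borel_measurable lborel"
    by (rule Q.borel_measurable_nn_integral) (unfold chi2_mix_fun_def, measurable)
  have "WH = (\<integral>\<^sup>+t. indicator {0<..<1} t * (\<integral>\<^sup>+y. ennreal (chi2_mix_fun t (h y)) \<partial>(Q \<bind> K)) \<partial>lborel)"
    unfolding WH_def using QK h_nonneg
    by (intro nn_integral_kl_fun_eq_chi2_mix_fun) (auto intro: prob_space_imp_sigma_finite)
  also have "\<dots> \<le> (\<integral>\<^sup>+t. indicator {0<..<1} t * (\<integral>\<^sup>+x. ennreal (chi2_mix_fun t (f x)) \<partial>Q)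
      * e2ennreal (eta_chi2 X K) \<partial>lborel)"
    by (intro nn_integral_mono) (auto simp: contraction(2) mult.assoc split: split_indicator)
  also have "\<dots> = WF * e2ennreal (eta_chi2 X K)"
    unfolding WF_def using f_nonneg
    by (simp add: nn_integral_multc nn_integral_kl_fun_eq_chi2_mix_fun prob_space_imp_sigma_finite \<open>prob_space Q\<close>)
  finally show "kl_div (P \<bind> K) (Q \<bind> K) \<le> kl_div P Q * eta_chi2 X K"
    using kl_P kl_PK enn2ereal_le_mult_iff[OF WF_pos_fin] contraction(1)[of "1/2"] by simp
qed

lemma kl_mixture_contraction:
  assumes K: "K \<in> X \<rightarrow>\<^sub>M prob_algebra Y" and Q: "Q \<in> space (prob_algebra X)" and Q_npm: "\<not> point_mass X Q"
    and f_meas[measurable]: "f \<in> borel_measurable Q" and f_nonneg: "\<And>x. 0 \<le> f x"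
    and f_int: "(\<integral>\<^sup>+x. ennreal (f x) \<partial>Q) = 1" and f_not_1: "\<not> (AE x in Q. f x = 1)"
    and C_fin: "(\<integral>\<^sup>+x. ennreal ((f x - 1)^2) \<partial>Q) < top"
    and h_meas[measurable]: "h \<in> borel_measurable (Q \<bind> K)" and h_nonneg: "\<And>y. 0 \<le> h y"
    and h_int: "(\<integral>\<^sup>+y. ennreal (h y) \<partial>(Q \<bind> K)) = 1"
    and bind_eq: "density Q (\<lambda>x. ennreal (f x)) \<bind> K = density (Q \<bind> K) (\<lambda>y. ennreal (h y))"
    and e: "0 < e" "e < 1"
  shows "0 \<le> eta_KL X K"
    and "(\<integral>\<^sup>+y. ennreal (kl_fun (1 - e + e * h y)) \<partial>(Q \<bind> K))
      \<le> (\<integral>\<^sup>+x. ennreal (kl_fun (1 - e + e * f x)) \<partial>Q) * e2ennreal (eta_KL X K)"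
proof -
  have "prob_space Q" using Q by (simp add: space_prob_algebra)
  have QK: "prob_space (Q \<bind> K)" by (rule prob_space_bind'[OF Q K])
  let ?Pe = "density Q (\<lambda>x. ennreal (1 - e + e * f x))"
  define WF where "WF = (\<integral>\<^sup>+x. ennreal (kl_fun (1 - e + e * f x)) \<partial>Q)"
  define WH where "WH = (\<integral>\<^sup>+y. ennreal (kl_fun (1 - e + e * h y)) \<partial>(Q \<bind> K))"
  have mix_nonneg: "0 \<le> 1 - e + e * y" if "0 \<le> y" for y
    using mixture_weight_pos[of e y] e that by simp
  have Pe: "?Pe \<in> space (prob_algebra X)"
    using density_mixture_in_prob_algebra[OF Q f_meas f_nonneg f_int] e by simp
  have kl_Pe: "kl_div ?Pe Q = enn2ereal WF"
    unfolding WF_def using e f_nonneg mix_nonneg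
    by (intro kl_div_density \<open>prob_space Q\<close> nn_integral_mixture_eq_1[OF \<open>prob_space Q\<close> f_meas f_nonneg f_int]) auto
  have PeK_eq: "?Pe \<bind> K = density (Q \<bind> K) (\<lambda>y. ennreal (1 - e + e * h y))"
    using e by (intro bind_density_mixture[OF Q K f_meas f_nonneg f_int h_meas h_nonneg bind_eq]) auto
  have kl_PeK: "kl_div (?Pe \<bind> K) (Q \<bind> K) = enn2ereal WH"
    unfolding PeK_eq WH_def using e h_nonneg mix_nonneg
    by (intro kl_div_density QK nn_integral_mixture_eq_1[OF QK h_meas h_nonneg h_int]) auto
  have "WF \<noteq> 0"
  proof -
    have "kl_fun (1 - e + e * y) = 0 \<longleftrightarrow> y = 1" if "0 \<le> y" for y
      using kl_fun_eq_0_iff[OF mix_nonneg[OF that]] e by auto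
    then show ?thesis
      using f_not_1 nn_integral_eq_0_iff_AE_eq_1[of "\<lambda>y. kl_fun (1 - e + e * y)" f Q] f_nonneg
        kl_fun_nonneg[OF mix_nonneg]
      by (auto simp: WF_def)
  qed
  moreover have "WF < top"
    using nn_integral_kl_fun_mixture_le[OF f_meas f_nonneg e] C_fin
    by (auto simp: WF_def ennreal_mult_less_top le_less_trans)
  ultimately have WF_pos_fin: "0 < WF" "WF < top" by (simp_all add: zero_less_iff_neq_zero)
  have "kl_div (?Pe \<bind> K) (Q \<bind> K) \<le> kl_div ?Pe Q * eta_KL X K"
    unfolding eta_KL_def using WF_pos_fin kl_Pe
    by (intro divergence_bind_le_eta[OF Q Q_npm Pe])
       (auto simp: zero_less_enn2ereal_iff enn2ereal_less_infinity_iff)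
  then show "0 \<le> eta_KL X K" and "WH \<le> WF * e2ennreal (eta_KL X K)"
    using kl_Pe kl_PeK enn2ereal_le_mult_iff[OF WF_pos_fin] by simp_all
qed

lemma eta_at_chi2_le_eta_kl:
  assumes K: "K \<in> X \<rightarrow>\<^sub>M prob_algebra Y" and Q: "Q \<in> space (prob_algebra X)" and Q_npm: "\<not> point_mass X Q"
  shows "eta_at chi2_div chi2_div X K Q \<le> eta_KL X K"
proof (rule eta_at_leI)
  fix P assume P: "P \<in> space (prob_algebra X)" and pos: "0 < chi2_div P Q" and fin: "chi2_div P Q < \<infinity>"
  obtain f h where f_meas[measurable]: "f \<in> borel_measurable Q" and f_nonneg: "\<And>x. 0 \<le> f x"
    and f_int: "(\<integral>\<^sup>+x. ennreal (f x) \<partial>Q) = 1" and P_eq: "P = density Q (\<lambda>x. ennreal (f x))"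
    and h_meas[measurable]: "h \<in> borel_measurable (Q \<bind> K)" and h_nonneg: "\<And>y. 0 \<le> h y"
    and h_int: "(\<integral>\<^sup>+y. ennreal (h y) \<partial>(Q \<bind> K)) = 1"
    and PK_eq: "P \<bind> K = density (Q \<bind> K) (\<lambda>y. ennreal (h y))"
    using obtain_bind_densities[OF Q P K absolutely_continuous_if_chi2_div_finite[OF fin]] by metis
  have "prob_space Q" using Q by (simp add: space_prob_algebra)
  have QK: "prob_space (Q \<bind> K)" by (rule prob_space_bind'[OF Q K])
  define C where "C = (\<integral>\<^sup>+x. ennreal ((f x - 1)^2) \<partial>Q)"
  define D where "D = (\<integral>\<^sup>+y. ennreal ((h y - 1)^2) \<partial>(Q \<bind> K))"
  have chi2_P: "chi2_div P Q = enn2ereal C"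
    unfolding P_eq C_def by (rule chi2_div_density) (auto simp: f_nonneg f_int \<open>prob_space Q\<close>)
  have chi2_PK: "chi2_div (P \<bind> K) (Q \<bind> K) = enn2ereal D"
    unfolding PK_eq D_def by (rule chi2_div_density) (auto simp: h_nonneg h_int QK)
  have C_pos_fin: "0 < C" "C < top"
    using pos fin chi2_P by (simp_all add: zero_less_enn2ereal_iff enn2ereal_less_infinity_iff less_top)
  have f_not_1: "\<not> (AE x in Q. f x = 1)"
    using C_pos_fin(1) nn_integral_eq_0_iff_AE_eq_1[of "\<lambda>y. (y - 1)^2" f Q] f_nonneg
    by (auto simp: C_def)
  define e where "e n = 1 / (real n + 2)" for n
  have e: "0 < e n" "e n < 1" for n by (auto simp: e_def)
  note contraction = kl_mixture_contraction[OF K Q Q_npm f_meas f_nonneg f_int f_not_1 _ h_meas h_nonneg h_int,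
      folded P_eq C_def, OF C_pos_fin(2) PK_eq e]
  have damped: "(\<integral>\<^sup>+y. ennreal ((h y - 1)^2 / (1 + e n * max (h y - 1) 0)) \<partial>(Q \<bind> K))
      \<le> ennreal (1 / (1 - e n)) * (C * e2ennreal (eta_KL X K))" for n
    unfolding C_def by (rule nn_integral_damped_square_le[OF f_meas h_meas f_nonneg h_nonneg e contraction(2)])
  have e_lim: "e \<longlonglongrightarrow> 0"
    unfolding e_def using LIMSEQ_ignore_initial_segment[OF lim_const_over_n[of "1::real"], of 2]
    by (simp add: add.commute)
  have "decseq e" by (simp add: decseq_def e_def frac_le)
  then have "(\<lambda>n. \<integral>\<^sup>+y. ennreal ((h y - 1)^2 / (1 + e n * max (h y - 1) 0)) \<partial>(Q \<bind> K)) \<longlonglongrightarrow> D"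
    unfolding D_def using e e_lim
    by (intro tendsto_nn_integral_divide_one_plus) (auto simp: less_imp_le)
  moreover have "(\<lambda>n. ennreal (1 / (1 - e n)) * (C * e2ennreal (eta_KL X K)))
      \<longlonglongrightarrow> ennreal (1 / (1 - 0)) * (C * e2ennreal (eta_KL X K))"
    by (intro tendsto_intros tendsto_ennrealI e_lim) auto
  ultimately have "D \<le> C * e2ennreal (eta_KL X K)"
    using damped by (intro LIMSEQ_le) auto
  then show "chi2_div (P \<bind> K) (Q \<bind> K) \<le> chi2_div P Q * eta_KL X K"
    using chi2_P chi2_PK enn2ereal_le_mult_iff[OF C_pos_fin] contraction(1) by simp
qed

theorem theorem3:
  fixes X :: "'a measure" and Y :: "'b measure" and K :: "'a \<Rightarrow> 'b measure"
  assumes "K \<in> measurable X (prob_algebra Y)"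
  shows "eta_chi2 X K = eta_KL X K"
proof (rule antisym)
  show "eta_chi2 X K \<le> eta_KL X K"
    unfolding eta_chi2_def eta_def by (rule SUP_least) (auto intro: eta_at_chi2_le_eta_kl[OF assms])
  show "eta_KL X K \<le> eta_chi2 X K"
    unfolding eta_KL_def eta_def by (rule SUP_least) (auto intro: eta_at_kl_le_eta_chi2[OF assms])
qed

end
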